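(* Let $\mathcal{G}=(V,E_1,\dots,E_T)$ be an always connected broadcast network with $n=|V|$ vertices, and let $\delta=\min_{v\in V}\Delta(v)$. Then $\mathcal{G}$ can be explored in $(\delta+1)(2n-3)$ timesteps, i.e. there is a temporal walk exploring $\mathcal{G}$ of length at most $(\delta+1)(2n-3)$.
   Context: A directed temporal graph $\mathcal{G}=(V,E_1,\dots,E_T)$ consists of a finite vertex set $V$ and an ordered sequence of sets $E_1,\dots,E_T$ of directed edges on $V$ (timesteps); $T$ is the lifetime; an edge $e$ is active at $t$ if $e\in E_t$; the underlying graph is $U(\mathcal{G})=(V,\bigcup_t E_t)$, assumed symmetric. $N(v)=\{u:(v,u)$ is an edge of $U(\mathcal{G})\}$ and $\Delta(v)=|N(v)|$. Write $[i,j]=\{i,\dots,j\}$. Such a $\mathcal{G}$ is a broadcast network if: (1) for every $v\in V$ and $t$, either all out-edges $\{(v,u):u\in N(v)\}$ belong to $E_t$ or none does; say $v$ is active at $t$ in the former case; (2) for all $t_1<t_2$, $v$ can be active at both $t_1$ and $t_2$ only if every $u\in N(v)$ is active at some timestep in $[t_1,t_2-1]$. It is always connected if each static graph $(V,E_t)$, $t\in[1,T]$, is connected. A temporal walk is a sequence $((v_{i_1},v_{i_2}),t_1),\dots,((v_{i_{m-1}},v_{i_m}),t_{m-1})$ of directed edges traversed in their orientation forming a walk in $U(\mathcal{G})$, each edge $(v_{i_j},v_{i_{j+1}})$ active at timestep $t_j$, with $t_1<\dots<t_{m-1}$; its length is $t_{m-1}$; it explores $\mathcal{G}$ if every vertex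 belongs to some edge of the walk. *)

theory Defs
  imports Main
begin

text \<open>A directed temporal graph is given by a vertex set V, a lifetime T and
  edge sets E t for the timesteps t in {1..T} (values of E outside {1..T} are irrelevant).\<close>

definition underlying_edges :: "nat \<Rightarrow> (nat \<Rightarrow> ('a \<times> 'a) set) \<Rightarrow> ('a \<times> 'a) set" where
  "underlying_edges T E = (\<Union>t\<in>{1..T}. E t)"

definition temporal_graph :: "'a set \<Rightarrow> nat \<Rightarrow> (nat \<Rightarrow> ('a \<times> 'a) set) \<Rightarrow> bool" where
  "temporal_graph V T E \<longleftrightarrow> finite V \<and> (\<forall>t\<in>{1..T}. E t \<subseteq> V \<times> V \<and> (\<forall>v. (v, v) \<notin> E t))
     \<and> sym (underlying_edges T E)"

definition nbrs :: "nat \<Rightarrow> (nat \<Rightarrow> ('a \<times> 'a) set) \<Rightarrow> 'a \<Rightarrow> 'a set" where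
  "nbrs T E v = {u. (v, u) \<in> underlying_edges T E}"

definition active :: "nat \<Rightarrow> (nat \<Rightarrow> ('a \<times> 'a) set) \<Rightarrow> 'a \<Rightarrow> nat \<Rightarrow> bool" where
  "active T E v t \<longleftrightarrow> (\<forall>u\<in>nbrs T E v. (v, u) \<in> E t)"

definition broadcast_network :: "'a set \<Rightarrow> nat \<Rightarrow> (nat \<Rightarrow> ('a \<times> 'a) set) \<Rightarrow> bool" where
  "broadcast_network V T E \<longleftrightarrow> temporal_graph V T E \<and>
     (\<forall>v\<in>V. \<forall>t\<in>{1..T}. (\<forall>u\<in>nbrs T E v. (v, u) \<in> E t) \<or> (\<forall>u\<in>nbrs T E v. (v, u) \<notin> E t)) \<and>
     (\<forall>v\<in>V. \<forall>t1\<in>{1..T}. \<forall>t2\<in>{1..T}. t1 < t2 \<and> active T E v t1 \<and> active T E v t2 \<longrightarrow>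
        (\<forall>u\<in>nbrs T E v. \<exists>t\<in>{t1..t2-1}. active T E u t))"

definition static_connected :: "'a set \<Rightarrow> ('a \<times> 'a) set \<Rightarrow> bool" where
  "static_connected V A \<longleftrightarrow> (\<forall>u\<in>V. \<forall>v\<in>V. (u, v) \<in> (A \<union> A\<inverse>)\<^sup>*)"

definition always_connected :: "'a set \<Rightarrow> nat \<Rightarrow> (nat \<Rightarrow> ('a \<times> 'a) set) \<Rightarrow> bool" where
  "always_connected V T E \<longleftrightarrow> (\<forall>t\<in>{1..T}. static_connected V (E t))"

definition temporal_walk :: "nat \<Rightarrow> (nat \<Rightarrow> ('a \<times> 'a) set) \<Rightarrow> (('a \<times> 'a) \<times> nat) list \<Rightarrow> bool" where
  "temporal_walk T E W \<longleftrightarrow> W \<noteq> [] \<and>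
     (\<forall>i<length W. snd (W ! i) \<in> {1..T} \<and> fst (W ! i) \<in> E (snd (W ! i))) \<and>
     (\<forall>i. Suc i < length W \<longrightarrow> snd (fst (W ! i)) = fst (fst (W ! Suc i)) \<and> snd (W ! i) < snd (W ! Suc i))"

definition walk_length :: "(('a \<times> 'a) \<times> nat) list \<Rightarrow> nat" where
  "walk_length W = snd (last W)"

definition explores :: "'a set \<Rightarrow> (('a \<times> 'a) \<times> nat) list \<Rightarrow> bool" where
  "explores V W \<longleftrightarrow> (\<forall>v\<in>V. \<exists>e\<in>set W. v = fst (fst e) \<or> v = snd (fst e))"

end

theory Submission
  imports Defs
begin

text \<open>Let \<open>x\<close> be a vertex of minimum degree \<open>d\<close>. Between two activations of a vertex all its
  neighbours are active, so along an edge the numbers of activations up to a time \<open>s\<close> differ by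
  at most one, and along a path of length \<open>k\<close> by at most \<open>k\<close>. Since every static graph is
  connected, at each timestep \<open>x\<close> or one of its neighbours is active; by pigeonhole and the
  broadcast rule \<open>x\<close> is then active in every window of \<open>d + 1\<close> steps. Hence a vertex at
  distance \<open>k\<close> from \<open>x\<close> is active at least \<open>q - k\<close> times up to time \<open>(d + 1) q\<close>.
  Now take a walk through all vertices whose number of edges plus the distance from its
  penultimate vertex back to \<open>x\<close> is at most \<open>2 n - 3\<close>, and traverse its \<open>j\<close>-th edge at an
  activation of its tail that is at most the \<open>(j + 1)\<close>-th one: these bounds show that such an
  activation always comes after the previous edge and by time \<open>(d + 1) (2 n - 3)\<close>.\<close>

fun count_upto :: "(nat \<Rightarrow> bool) \<Rightarrow> nat \<Rightarrow> nat" where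
  "count_upto P 0 = 0"
| "count_upto P (Suc s) = count_upto P s + (if P (Suc s) then 1 else 0)"

lemma count_upto_mono: "s \<le> s' \<Longrightarrow> count_upto P s \<le> count_upto P s'"
  by (induction s') (auto simp: le_Suc_eq)

lemma count_upto_at: "P t \<Longrightarrow> 0 < t \<Longrightarrow> count_upto P t = Suc (count_upto P (t - 1))"
  by (cases t) auto

lemma count_upto_next:
  "count_upto P t < count_upto P s \<Longrightarrow>
     \<exists>t'. t < t' \<and> t' \<le> s \<and> P t' \<and> count_upto P t' = Suc (count_upto P t)"
proof (induction s)
  case (Suc s)
  show ?case
  proof (cases "count_upto P t < count_upto P s")
    case True
    then show ?thesis using Suc.IH le_Suc_eq by blast
  next
    case False
    then have "P (Suc s)" "count_upto P t = count_upto P s"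
      using Suc.prems by (auto split: if_splits)
    moreover have "t < Suc s"
      using Suc.prems count_upto_mono[of "Suc s" t P] by (cases "t < Suc s") auto
    ultimately show ?thesis by auto
  qed
qed simp

lemma count_upto_last:
  "0 < count_upto P s \<Longrightarrow> \<exists>t. 0 < t \<and> t \<le> s \<and> P t \<and> count_upto P t = count_upto P s"
proof (induction s)
  case (Suc s)
  then show ?case by (cases "P (Suc s)") (auto intro: le_SucI)
qed simp

lemma count_upto_interleaved:
  assumes between: "\<And>t1 t2. 0 < t1 \<Longrightarrow> t1 < t2 \<Longrightarrow> t2 \<le> T \<Longrightarrow> P t1 \<Longrightarrow> P t2 \<Longrightarrow>
      \<exists>t\<in>{t1..<t2}. Q t"
    and "s \<le> T"
  shows "count_upto P s \<le> Suc (count_upto Q (s - 1))"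
proof -
  have at_P: "count_upto P t \<le> Suc (count_upto Q (t - 1))" if "P t" "0 < t" "t \<le> T" for t
    using that
  proof (induction t rule: less_induct)
    case (less t)
    show ?case
    proof (cases "count_upto P (t - 1) = 0")
      case True
      then show ?thesis using count_upto_at[of P t] less.prems by simp
    next
      case False
      then obtain t0 where t0: "0 < t0" "t0 \<le> t - 1" "P t0" "count_upto P t0 = count_upto P (t - 1)"
        using count_upto_last[of P "t - 1"] by auto
      then obtain t1 where t1: "t1 \<in> {t0..<t}" "Q t1"
        using between[of t0 t] less.prems by fastforce
      have "count_upto P t = Suc (count_upto P t0)"
        using count_upto_at[of P t] less.prems t0(4) by simp
      also have "\<dots> \<le> Suc (Suc (count_upto Q (t0 - 1)))"
        using less.IH[of t0] t0 less.prems by simp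
      also have "\<dots> \<le> Suc (count_upto Q t1)"
        using count_upto_at[of Q t1] count_upto_mono[of "t0 - 1" "t1 - 1" Q] t1 t0(1) by auto
      also have "\<dots> \<le> Suc (count_upto Q (t - 1))"
        using t1(1) by (auto intro: count_upto_mono)
      finally show ?thesis .
    qed
  qed
  show ?thesis
  proof (cases "count_upto P s = 0")
    case False
    then obtain t where "0 < t" "t \<le> s" "P t" "count_upto P t = count_upto P s"
      using count_upto_last[of P s] by auto
    then show ?thesis
      using at_P[of t] \<open>s \<le> T\<close> count_upto_mono[of "t - 1" "s - 1" Q] by fastforce
  qed simp
qed

lemma count_upto_windows:
  assumes window: "\<And>t. 0 < t \<Longrightarrow> t + d \<le> T \<Longrightarrow> \<exists>s\<in>{t..t + d}. P s"
  shows "Suc d * q \<le> T \<Longrightarrow> q \<le> count_upto P (Suc d * q)"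
proof (induction q)
  case (Suc q)
  obtain s where s: "s \<in> {Suc d * q + 1..Suc d * q + 1 + d}" "P s"
    using window[of "Suc d * q + 1"] Suc.prems by auto
  have "q \<le> count_upto P (Suc d * q)"
    using Suc by simp
  also have "\<dots> \<le> count_upto P (s - 1)"
    using s(1) by (auto intro: count_upto_mono)
  also have "\<dots> < count_upto P s"
    using count_upto_at[of P s] s by simp
  also have "\<dots> \<le> count_upto P (Suc d * Suc q)"
    using s(1) by (intro count_upto_mono) simp
  finally show ?case by simp
qed simp

lemma rtrancl_leaves_set:
  "(u, v) \<in> R\<^sup>* \<Longrightarrow> u \<in> S \<Longrightarrow> v \<notin> S \<Longrightarrow> \<exists>w z. (w, z) \<in> R \<and> w \<in> S \<and> z \<notin> S"
  by (induction rule: rtrancl_induct) auto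

lemma edge_leaving_subset:
  assumes "U \<subseteq> V \<times> V" and conn: "\<forall>u\<in>V. \<forall>v\<in>V. (u, v) \<in> U\<^sup>*"
    and "S \<subset> V" and "S \<noteq> {}"
  obtains w z where "(w, z) \<in> U" "w \<in> S" "z \<in> V - S"
proof -
  obtain u v where "u \<in> S" "v \<in> V - S"
    using assms(3,4) by blast
  then show ?thesis
    using rtrancl_leaves_set[of u v U S] conn assms that by blast
qed

text \<open>A new vertex \<open>z\<close> adjacent to the walk is visited by a detour \<open>w z w\<close>, unless it hangs off
  the last vertex \<open>b\<close>; then it is appended, and \<open>b\<close> becomes the penultimate vertex, one step
  further from \<open>x\<close>. Either way the length plus that distance grows by at most 2.\<close>
lemma walk_add_vertex:
  assumes "sym U" and "U \<subseteq> V \<times> V" and conn: "\<forall>u\<in>V. \<forall>v\<in>V. (u, v) \<in> U\<^sup>*"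
    and walk: "successively (\<lambda>u v. (u, v) \<in> U) (pre @ [a, b])"
    and sub: "set (pre @ [a, b]) \<subset> V" and "(a, x) \<in> U ^^ k"
  obtains pre' a' b' z k' where "successively (\<lambda>u v. (u, v) \<in> U) (pre' @ [a', b'])"
    "z \<in> V - set (pre @ [a, b])" "set (pre' @ [a', b']) = insert z (set (pre @ [a, b]))"
    "(a', x) \<in> U ^^ k'" "length pre' + k' \<le> length pre + k + 2"
proof -
  let ?P = "set (pre @ [a, b])"
  obtain w z where wz: "(w, z) \<in> U" "w \<in> ?P" "z \<in> V - ?P"
    using edge_leaving_subset[OF assms(2) conn sub] by auto
  have zw: "(z, w) \<in> U"
    using wz(1) \<open>sym U\<close> by (auto dest: symD)
  consider "w \<in> set pre" | "w = a" | "w = b"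
    using wz(2) by auto
  then show ?thesis
  proof cases
    case 1
    then obtain xs ys where pre: "pre = xs @ w # ys"
      by (meson split_list)
    have "successively (\<lambda>u v. (u, v) \<in> U) ((xs @ w # z # w # ys) @ [a, b])"
      using walk wz(1) zw unfolding pre by (auto simp: successively_append_iff successively_Cons)
    then show ?thesis
      using that[of "xs @ w # z # w # ys" a b z k] wz(3) \<open>(a, x) \<in> U ^^ k\<close> unfolding pre by auto
  next
    case 2
    have "successively (\<lambda>u v. (u, v) \<in> U) ((pre @ [a, z]) @ [a, b])"
      using walk wz(1) zw 2 by (auto simp: successively_append_iff)
    then show ?thesis
      using that[of "pre @ [a, z]" a b z k] wz(3) \<open>(a, x) \<in> U ^^ k\<close> by auto
  next
    case 3
    have "(b, a) \<in> U"
      using walk \<open>sym U\<close> by (auto simp: successively_append_iff dest: symD)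
    then have "(b, x) \<in> U ^^ Suc k"
      using \<open>(a, x) \<in> U ^^ k\<close> by (rule relpow_Suc_I2)
    moreover have "successively (\<lambda>u v. (u, v) \<in> U) ((pre @ [a]) @ [b, z])"
      using walk wz(1) 3 by (auto simp: successively_append_iff)
    ultimately show ?thesis
      using that[of "pre @ [a]" b z z "Suc k"] wz(3) by auto
  qed
qed

lemma covering_walk_with_short_return:
  assumes "finite V" and "sym U" and "U \<subseteq> V \<times> V" and conn: "\<forall>u\<in>V. \<forall>v\<in>V. (u, v) \<in> U\<^sup>*"
    and "card V \<ge> 2" and "x \<in> V"
  obtains pre a b k where "successively (\<lambda>u v. (u, v) \<in> U) (pre @ [a, b])"
    "set (pre @ [a, b]) = V" "(a, x) \<in> U ^^ k" "length pre + 1 + k \<le> 2 * card V - 3"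
proof -
  have "\<exists>pre a b k. successively (\<lambda>u v. (u, v) \<in> U) (pre @ [a, b]) \<and> set (pre @ [a, b]) \<subseteq> V \<and>
      card (set (pre @ [a, b])) = c \<and> (a, x) \<in> U ^^ k \<and> length pre + 1 + k \<le> 2 * c - 3"
    if "2 \<le> c" "c \<le> card V" for c
    using that
  proof (induction c rule: nat_induct_at_least)
    case base
    obtain w y where "(w, y) \<in> U" "w \<in> {x}" "y \<in> V - {x}"
    proof (rule edge_leaving_subset[OF assms(3) conn])
      show "{x} \<subset> V"
        using assms(5,6) by (auto simp: psubset_eq)
    qed simp
    then show ?case
      using \<open>x \<in> V\<close> by (intro exI[of _ "[]"] exI[of _ x] exI[of _ y] exI[of _ 0]) auto
  next
    case (Suc c)
    then obtain pre a b k where walk: "successively (\<lambda>u v. (u, v) \<in> U) (pre @ [a, b])"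
        "set (pre @ [a, b]) \<subseteq> V" "card (set (pre @ [a, b])) = c" "(a, x) \<in> U ^^ k"
        "length pre + 1 + k \<le> 2 * c - 3"
      by auto
    then have "set (pre @ [a, b]) \<subset> V"
      using Suc.prems by auto
    then obtain pre' a' b' z k' where walk': "successively (\<lambda>u v. (u, v) \<in> U) (pre' @ [a', b'])"
        "z \<in> V - set (pre @ [a, b])" "set (pre' @ [a', b']) = insert z (set (pre @ [a, b]))"
        "(a', x) \<in> U ^^ k'" "length pre' + k' \<le> length pre + k + 2"
      using walk_add_vertex[OF assms(2,3) conn walk(1) _ walk(4)] by blast
    have "card (set (pre' @ [a', b'])) = Suc c"
      using walk'(2,3) walk(3) by (simp del: set_append)
    moreover have "length pre' + 1 + k' \<le> 2 * Suc c - 3"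
      using walk'(5) walk(5) Suc.hyps by arith
    moreover have "set (pre' @ [a', b']) \<subseteq> V"
      using walk'(2,3) walk(2) by (simp del: set_append)
    ultimately show ?case
      using walk'(1,4) by (intro exI[of _ pre'] exI[of _ a'] exI[of _ b'] exI[of _ k']) simp
  qed
  then obtain pre a b k where "successively (\<lambda>u v. (u, v) \<in> U) (pre @ [a, b])"
      "set (pre @ [a, b]) \<subseteq> V" "card (set (pre @ [a, b])) = card V" "(a, x) \<in> U ^^ k"
      "length pre + 1 + k \<le> 2 * card V - 3"
    using assms(5) by blast
  moreover have "set (pre @ [a, b]) = V"
    using calculation(2,3) \<open>finite V\<close> by (simp add: card_subset_eq)
  ultimately show ?thesis
    using that by blast
qed

lemma broadcast_networkD:
  assumes "broadcast_network V T E"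
  shows "finite V" and "sym (underlying_edges T E)" and "underlying_edges T E \<subseteq> V \<times> V"
    and "t \<in> {1..T} \<Longrightarrow> E t \<subseteq> underlying_edges T E"
  using assms unfolding broadcast_network_def temporal_graph_def underlying_edges_def by auto

lemma finite_nbrs: "broadcast_network V T E \<Longrightarrow> finite (nbrs T E v)"
  using broadcast_networkD(1,3)[of V T E] by (auto simp: nbrs_def intro: finite_subset)

lemma nbrs_sym: "broadcast_network V T E \<Longrightarrow> u \<in> nbrs T E v \<longleftrightarrow> v \<in> nbrs T E u"
  using broadcast_networkD(2)[of V T E] by (auto simp: nbrs_def dest: symD)

lemma active_if_edge:
  assumes "broadcast_network V T E" and "t \<in> {1..T}" and "(v, u) \<in> E t"
  shows "active T E v t"
proof -
  have "v \<in> V" and "u \<in> nbrs T E v"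
    using assms broadcast_networkD(3,4)[OF assms(1)] by (auto simp: nbrs_def)
  then show ?thesis
    using assms unfolding broadcast_network_def active_def by blast
qed

lemma active_edge: "active T E v t \<Longrightarrow> (v, u) \<in> underlying_edges T E \<Longrightarrow> (v, u) \<in> E t"
  by (simp add: active_def nbrs_def)

lemma neighbour_active_between:
  assumes "broadcast_network V T E" and "u \<in> nbrs T E v"
    and "0 < t1" "t1 < t2" "t2 \<le> T" "active T E v t1" "active T E v t2"
  shows "\<exists>t\<in>{t1..<t2}. active T E u t"
proof -
  have "v \<in> V"
    using assms(2) broadcast_networkD(3)[OF assms(1)] by (auto simp: nbrs_def)
  moreover have "t1 \<in> {1..T}" "t2 \<in> {1..T}"
    using assms(3-5) by auto
  moreover have "\<forall>v\<in>V. \<forall>t1\<in>{1..T}. \<forall>t2\<in>{1..T}. t1 < t2 \<and> active T E v t1 \<and> active T E v t2 \<longrightarrow>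
      (\<forall>u\<in>nbrs T E v. \<exists>t\<in>{t1..t2 - 1}. active T E u t)"
    using assms(1) unfolding broadcast_network_def by blast
  ultimately have "\<exists>t\<in>{t1..t2 - 1}. active T E u t"
    using assms(2,4,6,7) by blast
  moreover have "{t1..t2 - 1} = {t1..<t2}"
    using assms(4) by auto
  ultimately show ?thesis by simp
qed

lemma activations_le_neighbour:
  assumes "broadcast_network V T E" and "v \<in> nbrs T E u" and "s \<le> T"
  shows "count_upto (active T E u) s \<le> Suc (count_upto (active T E v) (s - 1))"
  using count_upto_interleaved[OF neighbour_active_between[OF assms(1,2)] assms(3)] .

lemma activations_le_path:
  assumes "broadcast_network V T E" and "s \<le> T"
  shows "(v, x) \<in> underlying_edges T E ^^ k \<Longrightarrow>
    count_upto (active T E x) s \<le> count_upto (active T E v) s + k"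
proof (induction k arbitrary: v)
  case (Suc k)
  then obtain w where vw: "(v, w) \<in> underlying_edges T E" and "(w, x) \<in> underlying_edges T E ^^ k"
    using relpow_Suc_D2 by metis
  then have "count_upto (active T E x) s \<le> count_upto (active T E w) s + k"
    using Suc.IH by blast
  also have "count_upto (active T E w) s \<le> Suc (count_upto (active T E v) (s - 1))"
    using vw nbrs_sym[OF assms(1)] activations_le_neighbour[OF assms(1) _ assms(2)]
    by (auto simp: nbrs_def)
  also have "count_upto (active T E v) (s - 1) \<le> count_upto (active T E v) s"
    by (simp add: count_upto_mono)
  finally show ?case by simp
qed simp

lemma other_element_if_card_ge_2: "card V \<ge> 2 \<Longrightarrow> \<exists>z\<in>V. z \<noteq> x"
  using card_mono[of "{x}" V] by (cases "finite V") auto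

lemma active_or_neighbour_active:
  assumes "broadcast_network V T E" and "always_connected V T E"
    and "x \<in> V" and "z \<in> V" and "z \<noteq> x" and t: "t \<in> {1..T}"
  shows "active T E x t \<or> (\<exists>y\<in>nbrs T E x. active T E y t)"
proof -
  have "(x, z) \<in> (E t \<union> (E t)\<inverse>)\<^sup>*"
    using assms unfolding always_connected_def static_connected_def by blast
  then obtain y where "(x, y) \<in> E t \<or> (y, x) \<in> E t"
    using \<open>z \<noteq> x\<close> by (cases rule: converse_rtranclE) auto
  then show ?thesis
  proof
    assume "(x, y) \<in> E t"
    then show ?thesis using active_if_edge[OF assms(1) t] by blast
  next
    assume yx: "(y, x) \<in> E t"
    then have "y \<in> nbrs T E x"
      using broadcast_networkD(4)[OF assms(1) t] nbrs_sym[OF assms(1)] by (auto simp: nbrs_def)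
    then show ?thesis using active_if_edge[OF assms(1) t yx] by blast
  qed
qed

lemma active_in_window:
  assumes bn: "broadcast_network V T E" and "always_connected V T E" and "card V \<ge> 2"
    and "x \<in> V" and "0 < t" and "t + card (nbrs T E x) \<le> T"
  shows "\<exists>s\<in>{t..t + card (nbrs T E x)}. active T E x s"
proof (rule ccontr)
  assume idle: "\<not> ?thesis"
  let ?W = "{t..t + card (nbrs T E x)}"
  obtain z where "z \<in> V" "z \<noteq> x"
    using other_element_if_card_ge_2[OF \<open>card V \<ge> 2\<close>] by blast
  have "\<exists>y\<in>nbrs T E x. active T E y s" if "s \<in> ?W" for s
    using active_or_neighbour_active[OF assms(1,2,4) \<open>z \<in> V\<close> \<open>z \<noteq> x\<close>, of s] idle that assms(5,6)
    by auto
  then obtain f where f: "\<And>s. s \<in> ?W \<Longrightarrow> f s \<in> nbrs T E x \<and> active T E (f s) s"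
    by metis
  have "\<not> inj_on f ?W"
  proof
    assume "inj_on f ?W"
    then have "card ?W \<le> card (nbrs T E x)"
      using f finite_nbrs[OF bn] by (intro card_inj_on_le) auto
    then show False by simp
  qed
  then obtain s1 s2 where s12: "s1 \<in> ?W" "s2 \<in> ?W" "s1 < s2" "f s1 = f s2"
    unfolding inj_on_def by (metis linorder_neqE_nat)
  then have "x \<in> nbrs T E (f s1)"
    using f nbrs_sym[OF bn] by blast
  moreover have "0 < s1" "s2 \<le> T"
    using s12 assms(5,6) by auto
  ultimately obtain s where "s \<in> {s1..<s2}" "active T E x s"
    using neighbour_active_between[OF bn] s12 f by metis
  then show False
    using idle s12 by auto
qed

lemma activations_lower_bound:
  assumes "broadcast_network V T E" and "always_connected V T E" and "card V \<ge> 2"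
    and "x \<in> V" and "(v, x) \<in> underlying_edges T E ^^ k"
    and "Suc (card (nbrs T E x)) * q \<le> T"
  shows "q \<le> count_upto (active T E v) (Suc (card (nbrs T E x)) * q) + k"
  using count_upto_windows[OF active_in_window[OF assms(1-4)] assms(6)]
    activations_le_path[OF assms(1) assms(6) assms(5)] by simp

lemma zip_tl_append_pair: "zip (xs @ [a, b]) (tl (xs @ [a, b])) = zip (xs @ [a]) (tl (xs @ [a])) @ [(a, b)]"
  by (induction xs rule: induct_list012) auto

lemma explores_if_walk_covers:
  assumes "map fst W = zip ws (tl ws)" and "set ws = V" and "2 \<le> length ws"
  shows "explores V W"
proof -
  have "map (fst \<circ> fst) W = butlast ws" "map (snd \<circ> fst) W = tl ws"
    using arg_cong[OF assms(1), of "map fst"] arg_cong[OF assms(1), of "map snd"]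
    by (simp_all add: map_fst_zip_take map_snd_zip_take butlast_conv_take)
  moreover have "set ws = set (butlast ws) \<union> set (tl ws)"
    using assms(3) by (cases ws) (auto simp: butlast.simps dest: in_set_butlastD split: if_splits)
  ultimately show ?thesis
    using assms(2) unfolding explores_def by (metis (no_types, lifting) UnE comp_apply imageE list.set_map)
qed

lemma temporal_walk_singleton: "temporal_walk T E [e] \<longleftrightarrow> snd e \<in> {1..T} \<and> fst e \<in> E (snd e)"
  by (simp add: temporal_walk_def)

lemma temporal_walk_last:
  "temporal_walk T E W \<Longrightarrow> snd (last W) \<in> {1..T} \<and> fst (last W) \<in> E (snd (last W))"
  unfolding temporal_walk_def by (metis diff_less last_conv_nth length_greater_0_conv zero_less_one)

lemma temporal_walk_snoc:
  assumes "temporal_walk T E W" and "snd (fst (last W)) = fst (fst e)" and "snd (last W) < snd e"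
    and "snd e \<in> {1..T}" and "fst e \<in> E (snd e)"
  shows "temporal_walk T E (W @ [e])"
proof -
  have "W \<noteq> []"
    using assms(1) by (simp add: temporal_walk_def)
  then have "W ! i = last W" if "Suc i = length W" for i
    using that by (metis diff_Suc_1 last_conv_nth)
  then show ?thesis
    using assms unfolding temporal_walk_def
    by (auto simp: nth_append less_Suc_eq not_less_eq)
qed

lemma next_timed_edge:
  assumes bn: "broadcast_network V T E" and ac: "always_connected V T E" and "card V \<ge> 2"
    and "x \<in> V" and "(a, x) \<in> underlying_edges T E ^^ k" and "(a, b) \<in> underlying_edges T E"
    and "count_upto (active T E a) t < q" and "Suc (card (nbrs T E x)) * (q + k) \<le> T"
  obtains t' where "t < t'" "t' \<le> Suc (card (nbrs T E x)) * (q + k)" "(a, b) \<in> E t'"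
    "count_upto (active T E a) t' = Suc (count_upto (active T E a) t)"
proof -
  have "count_upto (active T E a) t < count_upto (active T E a) (Suc (card (nbrs T E x)) * (q + k))"
    using activations_lower_bound[OF assms(1-5,8)] assms(7) by simp
  then show ?thesis
    using count_upto_next active_edge[OF _ assms(6)] that by metis
qed

lemma temporal_walk_along:
  assumes bn: "broadcast_network V T E" and ac: "always_connected V T E" and cV: "card V \<ge> 2"
    and xV: "x \<in> V" and KT: "Suc (card (nbrs T E x)) * K \<le> T"
  shows "successively (\<lambda>u v. (u, v) \<in> underlying_edges T E) (pre @ [a, b]) \<Longrightarrow>
    (a, x) \<in> underlying_edges T E ^^ k \<Longrightarrow> length pre + 1 + k \<le> K \<Longrightarrow>
    \<exists>W. temporal_walk T E W \<and> map fst W = zip (pre @ [a, b]) (tl (pre @ [a, b])) \<and>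
      count_upto (active T E a) (walk_length W) \<le> length pre + 1 \<and>
      walk_length W \<le> Suc (card (nbrs T E x)) * (length pre + 1 + k)"
proof (induction pre arbitrary: a b k rule: rev_induct)
  case Nil
  have QT: "Suc (card (nbrs T E x)) * (1 + k) \<le> T"
    using Nil.prems(3) KT mult_le_mono2[of "1 + k" K "Suc (card (nbrs T E x))"] by simp
  then obtain t' where t': "0 < t'" "t' \<le> Suc (card (nbrs T E x)) * (1 + k)" "(a, b) \<in> E t'"
    "count_upto (active T E a) t' = 1"
    using next_timed_edge[OF assms(1-4) Nil.prems(2), of b 0 1] Nil.prems(1) by auto
  moreover have "t' \<in> {1..T}"
    using t'(1,2) QT by simp
  ultimately show ?case
    by (intro exI[of _ "[((a, b), t')]"]) (auto simp: temporal_walk_singleton walk_length_def)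
next
  case (snoc y pre)
  let ?U = "underlying_edges T E"
  have ya: "(y, a) \<in> ?U" and ab: "(a, b) \<in> ?U"
    and walk: "successively (\<lambda>u v. (u, v) \<in> ?U) (pre @ [y, a])"
    using snoc.prems(1) by (auto simp: successively_append_iff)
  obtain W where W: "temporal_walk T E W" "map fst W = zip (pre @ [y, a]) (tl (pre @ [y, a]))"
      "count_upto (active T E y) (walk_length W) \<le> length pre + 1"
      "walk_length W \<le> Suc (card (nbrs T E x)) * (length (pre @ [y]) + 1 + k)"
    using snoc.IH[OF walk relpow_Suc_I2[OF ya snoc.prems(2)]] snoc.prems(3) by auto
  define t where "t = walk_length W"
  have "W \<noteq> []"
    using W(1) by (simp add: temporal_walk_def)
  then have "fst (last W) = (y, a)"
    using arg_cong[OF W(2), of last] by (simp add: last_map zip_tl_append_pair)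
  then have t: "t \<in> {1..T}" "(y, a) \<in> E t"
    using temporal_walk_last[OF W(1)] by (auto simp: t_def walk_length_def)
  have "y \<in> nbrs T E a"
    using ya nbrs_sym[OF bn] by (simp add: nbrs_def)
  then have "count_upto (active T E a) t \<le> Suc (count_upto (active T E y) (t - 1))"
    using activations_le_neighbour[OF bn] t(1) by simp
  also have "\<dots> = count_upto (active T E y) t"
    using count_upto_at active_if_edge[OF bn t] t(1) by simp
  finally have "count_upto (active T E a) t < length (pre @ [y]) + 1"
    using W(3) by (simp add: t_def)
  moreover have QT: "Suc (card (nbrs T E x)) * (length (pre @ [y]) + 1 + k) \<le> T"
    using snoc.prems(3) KT mult_le_mono2[of _ K "Suc (card (nbrs T E x))"] by (meson le_trans)
  ultimately obtain t' where t': "t < t'"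
      "t' \<le> Suc (card (nbrs T E x)) * (length (pre @ [y]) + 1 + k)" "(a, b) \<in> E t'" "count_upto (active T E a) t' = Suc (count_upto (active T E a) t)"
    using next_timed_edge[OF assms(1-4) snoc.prems(2) ab, of t "length (pre @ [y]) + 1"] by blast
  have "temporal_walk T E (W @ [((a, b), t')])"
    using temporal_walk_snoc[OF W(1)] \<open>fst (last W) = (y, a)\<close> t' t(1) QT
    by (auto simp: t_def walk_length_def)
  moreover have "map fst (W @ [((a, b), t')]) = zip ((pre @ [y]) @ [a, b]) (tl ((pre @ [y]) @ [a, b]))"
    using W(2) zip_tl_append_pair[of "pre @ [y]" a b] by simp
  ultimately show ?case
    using t' \<open>count_upto (active T E a) t < _\<close>
    by (intro exI[of _ "W @ [((a, b), t')]"]) (auto simp: walk_length_def)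
qed

lemma Min_image_attained: "finite A \<Longrightarrow> A \<noteq> {} \<Longrightarrow> \<exists>x\<in>A. Min (f ` A) = f x"
  using Min_in[of "f ` A"] by (simp add: image_iff)

lemma underlying_connected:
  assumes "broadcast_network V T E" and "always_connected V T E" and "1 \<le> T"
  shows "\<forall>u\<in>V. \<forall>v\<in>V. (u, v) \<in> (underlying_edges T E)\<^sup>*"
proof -
  have "E 1 \<union> (E 1)\<inverse> \<subseteq> underlying_edges T E"
    using broadcast_networkD(2)[OF assms(1)] broadcast_networkD(4)[OF assms(1), of 1] assms(3)
    by (auto dest: symD)
  moreover have "\<forall>u\<in>V. \<forall>v\<in>V. (u, v) \<in> (E 1 \<union> (E 1)\<inverse>)\<^sup>*"
    using assms(2,3) unfolding always_connected_def static_connected_def by simp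
  ultimately show ?thesis
    using rtrancl_mono by blast
qed

theorem theorem17:
  fixes V :: "'a set" and T :: nat and E :: "nat \<Rightarrow> ('a \<times> 'a) set"
  assumes "broadcast_network V T E"
    and "always_connected V T E"
    and "card V \<ge> 2"
    and "T \<ge> (Min ((\<lambda>v. card (nbrs T E v)) ` V) + 1) * (2 * card V - 3)"
  shows "\<exists>W. temporal_walk T E W \<and> explores V W \<and>
           walk_length W \<le> (Min ((\<lambda>v. card (nbrs T E v)) ` V) + 1) * (2 * card V - 3)"
proof -
  note bn = assms(1)
  obtain x where "x \<in> V" and x_min: "Min ((\<lambda>v. card (nbrs T E v)) ` V) = card (nbrs T E x)"
    using Min_image_attained[OF broadcast_networkD(1)[OF bn], of "\<lambda>v. card (nbrs T E v)"] assms(3)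
    by fastforce
  let ?K = "2 * card V - 3"
  have KT: "Suc (card (nbrs T E x)) * ?K \<le> T"
    using assms(4) unfolding x_min by simp
  moreover have "1 \<le> Suc (card (nbrs T E x)) * ?K"
    using assms(3) by simp
  ultimately have "1 \<le> T"
    by linarith
  obtain pre a b k where walk: "successively (\<lambda>u v. (u, v) \<in> underlying_edges T E) (pre @ [a, b])"
      "set (pre @ [a, b]) = V" "(a, x) \<in> underlying_edges T E ^^ k" "length pre + 1 + k \<le> ?K"
    using covering_walk_with_short_return[OF broadcast_networkD(1-3)[OF bn]
        underlying_connected[OF bn assms(2) \<open>1 \<le> T\<close>] assms(3) \<open>x \<in> V\<close>] .
  obtain W where W: "temporal_walk T E W" "map fst W = zip (pre @ [a, b]) (tl (pre @ [a, b]))"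
      "walk_length W \<le> Suc (card (nbrs T E x)) * (length pre + 1 + k)"
    using temporal_walk_along[OF bn assms(2,3) \<open>x \<in> V\<close> KT walk(1,3,4)] by blast
  have "explores V W"
    using explores_if_walk_covers[OF W(2) walk(2)] by simp
  moreover have "walk_length W \<le> Suc (card (nbrs T E x)) * ?K"
    using W(3) walk(4) mult_le_mono2[of _ ?K "Suc (card (nbrs T E x))"] by (meson le_trans)
  ultimately show ?thesis
    unfolding x_min using W(1) by (intro exI[of _ W]) simp
qed

end
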